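(* Let $X=(X_1,\dots,X_d)$ be a random vector with values in $\{0,1\}^d$ such that $\mathbb{P}(X=x)>0$ for every $x\in\{0,1\}^d$, let $G:\{0,1\}^d\to\mathbb{R}$, and let $\Gamma=(\Gamma_{A,B})_{A,B\subseteq D}$ with $\Gamma_{A,B}:=\mathbb{E}[e_A(X_A)e_B(X_B)]$ (an invertible matrix). For $A\subseteq D$ define $e^\star_A(X):=\sum_{B\subseteq D}(\Gamma^{-1})_{A,B}\,e_B(X_B)$. Then for all $A,B\subseteq D$, $\langle e_B(X_B),e^\star_A(X)\rangle=\mathbf{1}_{\{A=B\}}$, and $$G(X)=\sum_{A\subseteq D}\langle G(X),e^\star_A(X)\rangle\, e_A(X_A)\quad\text{a.s.}$$
   Context: $D=\{1,\dots,d\}$; for $A\subseteq D$, $X_A:=(X_i)_{i\in A}$, $\mathbf{P}_A(x_A):=\mathbb{P}(X_A=x_A)$, and $e_A(X_A):=\dfrac{(-1)^{\sum_{j\in A}X_j}}{\mathbf{P}_A(X_A)}$ with $e_\emptyset(X_\emptyset)=1$. The inner product is $\langle U,V\rangle:=\mathbb{E}[UV]$ for real random variables $U,V$ that are functions of $X$. *)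

theory Defs
  imports "HOL-Probability.Probability"
begin

definition Dset :: "nat \<Rightarrow> nat set" where
  "Dset d = {1..d}"

text \<open>The cube {0,1}^d, realised as extensional functions nat => nat supported on D.\<close>
definition cube :: "nat \<Rightarrow> (nat \<Rightarrow> nat) set" where
  "cube d = {x. (\<forall>i\<in>Dset d. x i \<in> {0,1}) \<and> (\<forall>i. i \<notin> Dset d \<longrightarrow> x i = 0)}"

definition margP :: "'a measure \<Rightarrow> ('a \<Rightarrow> nat \<Rightarrow> nat) \<Rightarrow> nat set \<Rightarrow> (nat \<Rightarrow> nat) \<Rightarrow> real" where
  "margP M X A x = measure M {\<omega> \<in> space M. \<forall>j\<in>A. X \<omega> j = x j}"

text \<open>e_A(x_A) = (-1)^(sum_{j in A} x_j) / P_A(x_A); e_{empty} = 1 automatically.\<close>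
definition ebasis :: "'a measure \<Rightarrow> ('a \<Rightarrow> nat \<Rightarrow> nat) \<Rightarrow> nat set \<Rightarrow> (nat \<Rightarrow> nat) \<Rightarrow> real" where
  "ebasis M X A x = (-1) ^ (\<Sum>j\<in>A. x j) / margP M X A x"

definition inner_rv :: "'a measure \<Rightarrow> ('a \<Rightarrow> real) \<Rightarrow> ('a \<Rightarrow> real) \<Rightarrow> real" where
  "inner_rv M U V = integral\<^sup>L M (\<lambda>\<omega>. U \<omega> * V \<omega>)"

definition Gamma :: "'a measure \<Rightarrow> ('a \<Rightarrow> nat \<Rightarrow> nat) \<Rightarrow> nat set \<Rightarrow> nat set \<Rightarrow> real" where
  "Gamma M X A B = inner_rv M (\<lambda>\<omega>. ebasis M X A (X \<omega>)) (\<lambda>\<omega>. ebasis M X B (X \<omega>))"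

definition Gamma_inv :: "nat \<Rightarrow> 'a measure \<Rightarrow> ('a \<Rightarrow> nat \<Rightarrow> nat) \<Rightarrow> nat set \<Rightarrow> nat set \<Rightarrow> real" where
  "Gamma_inv d M X = (THE N.
     (\<forall>A B. \<not> (A \<subseteq> Dset d \<and> B \<subseteq> Dset d) \<longrightarrow> N A B = 0) \<and>
     (\<forall>A\<in>Pow (Dset d). \<forall>C\<in>Pow (Dset d).
        (\<Sum>B\<in>Pow (Dset d). Gamma M X A B * N B C) = (if A = C then 1 else 0) \<and>
        (\<Sum>B\<in>Pow (Dset d). N A B * Gamma M X B C) = (if A = C then 1 else 0)))"

definition edual :: "nat \<Rightarrow> 'a measure \<Rightarrow> ('a \<Rightarrow> nat \<Rightarrow> nat) \<Rightarrow> nat set \<Rightarrow> 'a \<Rightarrow> real" where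
  "edual d M X A \<omega> = (\<Sum>B\<in>Pow (Dset d). Gamma_inv d M X A B * ebasis M X B (X \<omega>))"

end

theory Submission
  imports Defs "HOL-Library.Function_Algebras"
begin

(* The functions e_A, A \<subseteq> D, are linearly independent on the cube {0,1}^d: pair a vanishing
   combination with the Walsh function (-1)^(\<Sum>i\<in>A0. x_i) of an inclusion-maximal A0 with
   nonzero coefficient.  Flipping a coordinate j \<in> A0 - B changes the sign of the Walsh function
   but not e_B, so every term except the one of A0 vanishes, and that one is
   c_A0 \<Sum>x 1 / P_A0(x_A0) \<noteq> 0.  There are as many sets A as points of the cube, so the e_A form a
   basis of the functions on the cube.  Hence their Gram matrix \<Gamma> for the inner product
   \<Sum>x f(x) g(x) P(X = x), which is positive definite because every atom has positive mass,
   is invertible, the e*_A form the dual basis, and the coordinates of G in the basis e_A are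
   the inner products \<langle>G, e*_A\<rangle>. *)

section \<open>Finite families of real functions\<close>

interpretation fun_vs: vector_space "\<lambda>(r::real) (f::'a \<Rightarrow> real) x. r * f x"
  by unfold_locales (auto simp: fun_eq_iff algebra_simps)

lemma sum_fun_apply: "(\<Sum>i\<in>I. F i) x = (\<Sum>i\<in>I. F i x)"
  by (induction I rule: infinite_finite_induct) auto

lemma (in vector_space) span_subset_span_independent:
  assumes T: "finite T" and B: "independent B" "B \<subseteq> span T" and card: "card T \<le> card B"
  shows "span T \<subseteq> span B"
proof (rule span_minimal[OF _ subspace_span], rule subsetI, rule ccontr)
  fix a assume a: "a \<in> T" "a \<notin> span B"
  then have "a \<notin> B"
    using span_base by blast
  have "insert a B \<subseteq> span T"
    using a(1) B(2) by (simp add: span_base)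
  with independent_span_bound[OF T independent_insertI[OF a(2) B(1)]]
  have "finite B" "card (insert a B) \<le> card T"
    by simp_all
  with \<open>a \<notin> B\<close> card show False
    by simp
qed

lemma restriction_in_span_indicators:
  assumes "finite S"
  shows "(\<lambda>x. if x \<in> S then g x else 0) \<in> fun_vs.span ((\<lambda>y. indicator {y} :: 'p \<Rightarrow> real) ` S)"
proof -
  have "(\<lambda>x. if x \<in> S then g x else 0) = (\<Sum>y\<in>S. (\<lambda>x. g y * indicator {y} x))"
    using assms by (auto simp: fun_eq_iff sum_fun_apply indicator_def)
  also have "\<dots> \<in> fun_vs.span ((\<lambda>y. indicator {y}) ` S)"
    by (intro fun_vs.span_sum fun_vs.span_scale fun_vs.span_base) auto
  finally show ?thesis .
qed

lemma independent_restrictions: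
  fixes v :: "'i \<Rightarrow> 'p \<Rightarrow> real"
  assumes I: "finite I"
    and indep: "\<And>c. (\<And>x. x \<in> S \<Longrightarrow> (\<Sum>i\<in>I. c i * v i x) = 0) \<Longrightarrow> \<forall>i\<in>I. c i = 0"
  defines "E \<equiv> \<lambda>i x. if x \<in> S then v i x else 0"
  shows "inj_on E I" and "fun_vs.independent (E ` I)"
proof -
  show inj: "inj_on E I"
  proof (rule inj_onI, rule ccontr)
    fix i j assume "i \<in> I" "j \<in> I" "E i = E j" "i \<noteq> j"
    have "v i x = v j x" if "x \<in> S" for x
      using fun_cong[OF \<open>E i = E j\<close>, of x] that by (simp add: E_def)
    with \<open>i \<in> I\<close> \<open>j \<in> I\<close>
    have "(\<Sum>k\<in>I. (indicator {i} k - indicator {j} k) * v k x) = 0" if "x \<in> S" for x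
      using I that by (simp add: left_diff_distrib sum_subtractf indicator_def)
    then have "\<forall>k\<in>I. indicator {i} k - indicator {j} k = (0::real)"
      by (rule indep)
    with \<open>i \<in> I\<close> \<open>i \<noteq> j\<close> show False by auto
  qed
  show "fun_vs.independent (E ` I)"
  proof
    assume "fun_vs.dependent (E ` I)"
    then obtain u where u: "\<exists>w\<in>E ` I. u w \<noteq> 0" "(\<Sum>w\<in>E ` I. (\<lambda>x. u w * w x)) = 0"
      using fun_vs.dependent_finite[of "E ` I"] I by blast
    then have zero: "(\<Sum>i\<in>I. (\<lambda>x. u (E i) * E i x)) = 0"
      by (simp add: sum.reindex[OF inj])
    have "(\<Sum>i\<in>I. u (E i) * v i x) = 0" if "x \<in> S" for x
      using fun_cong[OF zero, of x] that by (simp add: sum_fun_apply E_def)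
    then have "\<forall>i\<in>I. u (E i) = 0"
      by (rule indep)
    with u(1) show False by auto
  qed
qed

lemma independent_functions_span:
  fixes v :: "'i \<Rightarrow> 'p \<Rightarrow> real"
  assumes I: "finite I" and S: "finite S" and card: "card S \<le> card I"
    and indep: "\<And>c. (\<And>x. x \<in> S \<Longrightarrow> (\<Sum>i\<in>I. c i * v i x) = 0) \<Longrightarrow> \<forall>i\<in>I. c i = 0"
  shows "\<exists>c. \<forall>x\<in>S. f x = (\<Sum>i\<in>I. c i * v i x)"
proof -
  \<comment> \<open>The restrictions E i of the v i to S are card I independent vectors in the span of the
    card S indicator functions of the points of S, hence they span it.\<close>
  define E where "E i = (\<lambda>x. if x \<in> S then v i x else 0)" for i
  define units where "units = (\<lambda>y. indicator {y} :: 'p \<Rightarrow> real) ` S"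
  have inj: "inj_on E I" and independent: "fun_vs.independent (E ` I)"
    using independent_restrictions[where S = S and v = v, OF I indep] by (simp_all add: E_def[abs_def])
  have "E ` I \<subseteq> fun_vs.span units"
    using restriction_in_span_indicators[OF S] by (auto simp: E_def units_def)
  moreover have "card units \<le> card (E ` I)"
    using card_image_le[OF S, of "\<lambda>y. indicator {y} :: 'p \<Rightarrow> real"] card card_image[OF inj]
    by (simp add: units_def)
  ultimately have "fun_vs.span units \<subseteq> fun_vs.span (E ` I)"
    using S by (intro fun_vs.span_subset_span_independent[OF _ independent]) (simp_all add: units_def)
  then have "(\<lambda>x. if x \<in> S then f x else 0) \<in> fun_vs.span (E ` I)"
    using restriction_in_span_indicators[OF S, of f] unfolding units_def by blast
  then obtain u where "(\<lambda>x. if x \<in> S then f x else 0) = (\<Sum>w\<in>E ` I. (\<lambda>x. u w * w x))"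
    using fun_vs.span_finite[of "E ` I"] I by blast
  then have expansion: "(\<lambda>x. if x \<in> S then f x else 0) = (\<Sum>i\<in>I. (\<lambda>x. u (E i) * E i x))"
    by (simp add: sum.reindex[OF inj])
  have "f x = (\<Sum>i\<in>I. u (E i) * v i x)" if "x \<in> S" for x
    using fun_cong[OF expansion, of x] that by (simp add: sum_fun_apply E_def)
  then show ?thesis
    by (intro exI[of _ "\<lambda>i. u (E i)"] ballI)
qed

lemma left_inverse_eq_right_inverse:
  fixes L G R :: "'i \<Rightarrow> 'i \<Rightarrow> real"
  assumes I: "finite I"
    and left: "\<And>A C. A \<in> I \<Longrightarrow> C \<in> I \<Longrightarrow> (\<Sum>B\<in>I. L A B * G B C) = (if A = C then 1 else 0)"
    and right: "\<And>A C. A \<in> I \<Longrightarrow> C \<in> I \<Longrightarrow> (\<Sum>B\<in>I. G A B * R B C) = (if A = C then 1 else 0)"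
    and A: "A \<in> I" and C: "C \<in> I"
  shows "L A C = R A C"
proof -
  have "L A C = (\<Sum>B\<in>I. L A B * (if B = C then 1 else 0))"
    using I C by (simp add: of_bool_def[symmetric] Int_absorb1)
  also have "\<dots> = (\<Sum>B\<in>I. L A B * (\<Sum>E\<in>I. G B E * R E C))"
    using C by (simp add: right)
  also have "\<dots> = (\<Sum>B\<in>I. \<Sum>E\<in>I. L A B * G B E * R E C)"
    by (simp add: sum_distrib_left mult.assoc)
  also have "\<dots> = (\<Sum>E\<in>I. (\<Sum>B\<in>I. L A B * G B E) * R E C)"
    by (subst sum.swap) (simp add: sum_distrib_right)
  also have "\<dots> = (\<Sum>E\<in>I. (if A = E then 1 else 0) * R E C)"
    using A by (simp add: left)
  also have "\<dots> = R A C"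
    using I A by (simp add: of_bool_def[symmetric])
  finally show ?thesis .
qed

lemma symmetric_injective_matrix_invertible:
  fixes G :: "'i \<Rightarrow> 'i \<Rightarrow> real"
  assumes I: "finite I" and sym: "\<And>A B. G A B = G B A"
    and inj: "\<And>c. (\<And>A. A \<in> I \<Longrightarrow> (\<Sum>B\<in>I. c B * G A B) = 0) \<Longrightarrow> \<forall>B\<in>I. c B = 0"
  obtains N where
    "\<And>A C. A \<in> I \<Longrightarrow> C \<in> I \<Longrightarrow> (\<Sum>B\<in>I. N A B * G B C) = (if A = C then 1 else 0)"
    "\<And>A C. A \<in> I \<Longrightarrow> C \<in> I \<Longrightarrow> (\<Sum>B\<in>I. G A B * N B C) = (if A = C then 1 else 0)"
proof -
  have "\<forall>C. \<exists>c. \<forall>A\<in>I. (if A = C then 1 else 0) = (\<Sum>B\<in>I. c B * G A B)"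
    by (intro allI independent_functions_span[OF I I order.refl]) (use inj in blast)
  from choice[OF this] obtain N
    where N: "\<And>A C. A \<in> I \<Longrightarrow> (if A = C then 1 else 0) = (\<Sum>B\<in>I. N C B * G A B)"
    by blast
  have left: "(\<Sum>B\<in>I. N A B * G B C) = (if A = C then 1 else 0)" if "C \<in> I" for A C
    using N[OF that, of A] by (simp add: sym eq_commute[of C])
  have right: "(\<Sum>B\<in>I. G A B * N C B) = (if A = C then 1 else 0)" if "A \<in> I" for A C
    using N[OF that, of C] by (simp add: mult.commute)
  have "N A C = N C A" if "A \<in> I" "C \<in> I" for A C
    by (rule left_inverse_eq_right_inverse[OF I left right that])
  with left right show thesis
    by (intro that[of N]) simp_all
qed

section \<open>Weighted inner products on a finite set\<close>

definition weighted_inner :: "'p set \<Rightarrow> ('p \<Rightarrow> real) \<Rightarrow> ('p \<Rightarrow> real) \<Rightarrow> ('p \<Rightarrow> real) \<Rightarrow> real" where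
  "weighted_inner S w f g = (\<Sum>x\<in>S. f x * g x * w x)"

lemma weighted_inner_commute: "weighted_inner S w f g = weighted_inner S w g f"
  unfolding weighted_inner_def by (simp add: ac_simps)

lemma weighted_inner_cong:
  "(\<And>x. x \<in> S \<Longrightarrow> f x = f' x) \<Longrightarrow> weighted_inner S w f g = weighted_inner S w f' g"
  unfolding weighted_inner_def by simp

lemma weighted_inner_sum_right:
  "weighted_inner S w f (\<lambda>x. \<Sum>i\<in>I. c i * g i x) = (\<Sum>i\<in>I. c i * weighted_inner S w f (g i))"
proof -
  have "weighted_inner S w f (\<lambda>x. \<Sum>i\<in>I. c i * g i x) = (\<Sum>x\<in>S. \<Sum>i\<in>I. c i * (f x * g i x * w x))"
    unfolding weighted_inner_def by (simp add: sum_distrib_left sum_distrib_right ac_simps)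
  also have "\<dots> = (\<Sum>i\<in>I. c i * weighted_inner S w f (g i))"
    unfolding weighted_inner_def by (subst sum.swap) (simp add: sum_distrib_left)
  finally show ?thesis .
qed

lemma weighted_inner_sum_left:
  "weighted_inner S w (\<lambda>x. \<Sum>i\<in>I. c i * f i x) g = (\<Sum>i\<in>I. c i * weighted_inner S w (f i) g)"
  using weighted_inner_sum_right[where f = g and g = f] by (simp add: weighted_inner_commute)

lemma gram_injective:
  fixes e :: "'i \<Rightarrow> 'p \<Rightarrow> real"
  assumes S: "finite S" and w: "\<And>x. x \<in> S \<Longrightarrow> w x > 0"
    and indep: "\<And>c. (\<And>x. x \<in> S \<Longrightarrow> (\<Sum>i\<in>I. c i * e i x) = 0) \<Longrightarrow> \<forall>i\<in>I. c i = 0"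
    and zero: "\<And>i. i \<in> I \<Longrightarrow> (\<Sum>j\<in>I. c j * weighted_inner S w (e i) (e j)) = 0"
  shows "\<forall>i\<in>I. c i = 0"
proof (rule indep)
  define g where "g x = (\<Sum>i\<in>I. c i * e i x)" for x
  have "(\<Sum>x\<in>S. g x * g x * w x) = (\<Sum>i\<in>I. c i * (\<Sum>j\<in>I. c j * weighted_inner S w (e i) (e j)))"
    unfolding g_def weighted_inner_def[symmetric]
    by (simp add: weighted_inner_sum_left weighted_inner_sum_right)
  also have "\<dots> = 0"
    by (simp add: zero)
  moreover have "0 \<le> g x * g x * w x" if "x \<in> S" for x
    using w[OF that] by (intro mult_nonneg_nonneg[of "g x * g x"]) simp_all
  ultimately have "\<forall>x\<in>S. g x * g x * w x = 0"
    using S by (simp add: sum_nonneg_eq_0_iff)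
  then show "g x = 0" if "x \<in> S" for x
    using w[OF that] that by auto
qed

lemma weighted_inner_gram_left_inverse:
  assumes "\<And>i j. i \<in> I \<Longrightarrow> j \<in> I \<Longrightarrow>
      (\<Sum>k\<in>I. N i k * weighted_inner S w (e k) (e j)) = (if i = j then 1 else 0)"
    and "i \<in> I" "j \<in> I"
  shows "weighted_inner S w (e j) (\<lambda>x. \<Sum>k\<in>I. N i k * e k x) = (if i = j then 1 else 0)"
  using assms by (simp add: weighted_inner_sum_right weighted_inner_commute[of S w "e j"])

lemma weighted_inner_dual_coefficient:
  assumes I: "finite I"
    and dual: "\<And>i j. i \<in> I \<Longrightarrow> j \<in> I \<Longrightarrow> weighted_inner S w (e j) (\<psi> i) = (if i = j then 1 else 0)"
    and f: "\<And>x. x \<in> S \<Longrightarrow> f x = (\<Sum>j\<in>I. c j * e j x)"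
    and i: "i \<in> I"
  shows "weighted_inner S w f (\<psi> i) = c i"
proof -
  have "weighted_inner S w f (\<psi> i) = (\<Sum>j\<in>I. c j * weighted_inner S w (e j) (\<psi> i))"
    using f by (simp add: weighted_inner_cong[of S f] weighted_inner_sum_left)
  also have "\<dots> = (\<Sum>j\<in>I. c j * of_bool (j = i))"
    using i by (intro sum.cong) (auto simp: dual)
  also have "\<dots> = c i"
    using I i by simp
  finally show ?thesis .
qed

section \<open>The binary cube and Walsh functions\<close>

lemma finite_Dset: "finite (Dset d)"
  by (simp add: Dset_def)

lemma cube_subset_indicators: "cube d \<subseteq> (\<lambda>A j. if j \<in> A then 1 else 0) ` Pow (Dset d)"
proof
  fix x assume x: "x \<in> cube d"
  have "x = (\<lambda>j. if j \<in> {j \<in> Dset d. x j = 1} then 1 else 0)"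
    using x unfolding cube_def by (force simp: fun_eq_iff)
  then show "x \<in> (\<lambda>A j. if j \<in> A then 1 else 0) ` Pow (Dset d)"
    by blast
qed

lemma finite_cube: "finite (cube d)"
  using finite_subset[OF cube_subset_indicators] finite_Dset by blast

lemma card_cube_le: "card (cube d) \<le> card (Pow (Dset d))"
  using card_mono[OF _ cube_subset_indicators] card_image_le finite_Dset le_trans by blast

lemma zero_in_cube: "(\<lambda>_. 0) \<in> cube d"
  by (simp add: cube_def)

definition walsh :: "nat set \<Rightarrow> (nat \<Rightarrow> nat) \<Rightarrow> real" where
  "walsh A x = (-1) ^ (\<Sum>i\<in>A. x i)"

lemma walsh_mult_self: "walsh A x * walsh A x = 1"
  by (simp add: walsh_def power_add[symmetric])

lemma ebasis_eq_walsh: "ebasis M X A x = walsh A x / margP M X A x"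
  by (simp add: ebasis_def walsh_def)

lemma ebasis_cong: "(\<And>j. j \<in> B \<Longrightarrow> x j = y j) \<Longrightarrow> ebasis M X B x = ebasis M X B y"
  by (simp add: ebasis_def margP_def)

lemma walsh_flip:
  assumes "finite A" "j \<in> A" "x j \<in> {0, 1}"
  shows "walsh A (x(j := 1 - x j)) = - walsh A x"
proof -
  have "(\<Sum>i\<in>A. (x(j := 1 - x j)) i) = (1 - x j) + (\<Sum>i\<in>A - {j}. x i)"
    using assms(1,2) by (simp add: sum.remove)
  moreover have "(\<Sum>i\<in>A. x i) = x j + (\<Sum>i\<in>A - {j}. x i)"
    using assms(1,2) by (simp add: sum.remove)
  ultimately show ?thesis
    using assms(3) by (auto simp: walsh_def power_add)
qed

lemma sum_walsh_ebasis_eq_0: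
  assumes j: "j \<in> A" "j \<notin> B" and A: "A \<subseteq> Dset d"
  shows "(\<Sum>x\<in>cube d. walsh A x * ebasis M X B x) = 0"
proof -
  define flip where "flip x = x(j := 1 - x j)" for x :: "nat \<Rightarrow> nat"
  have jD: "j \<in> Dset d" and finA: "finite A"
    using j A finite_Dset finite_subset by blast+
  have binary: "x j \<in> {0, 1}" if "x \<in> cube d" for x
    using that jD by (auto simp: cube_def)
  have flip_in: "flip x \<in> cube d" if "x \<in> cube d" for x
    using that jD by (auto simp: cube_def flip_def)
  have flip_flip: "flip (flip x) = x" if "x \<in> cube d" for x
    using binary[OF that] by (auto simp: flip_def fun_eq_iff)
  have "walsh A (flip x) * ebasis M X B (flip x) = - (walsh A x * ebasis M X B x)"
    if "x \<in> cube d" for x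
  proof -
    have "ebasis M X B (flip x) = ebasis M X B x"
      using j(2) by (intro ebasis_cong) (auto simp: flip_def)
    then show ?thesis
      using walsh_flip[of A j x, OF finA j(1) binary[OF that]] by (simp add: flip_def)
  qed
  then have "(\<Sum>x\<in>cube d. walsh A x * ebasis M X B x) = - (\<Sum>x\<in>cube d. walsh A x * ebasis M X B x)"
    unfolding sum_negf[symmetric]
    by (intro sum.reindex_bij_witness[of _ flip flip]) (auto simp: flip_in flip_flip)
  then show ?thesis
    by simp
qed

section \<open>The basis e_A of a random vector with full support\<close>

locale binary_random_vector = prob_space M for M :: "'a measure" +
  fixes X :: "'a \<Rightarrow> nat \<Rightarrow> nat" and d :: nat
  assumes X_measurable: "X \<in> measurable M (count_space (cube d))"
    and X_atoms_pos: "\<forall>x\<in>cube d. measure M {\<omega> \<in> space M. X \<omega> = x} > 0"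
begin

definition point_prob :: "(nat \<Rightarrow> nat) \<Rightarrow> real" where
  "point_prob x = measure M {\<omega> \<in> space M. X \<omega> = x}"

lemma X_in_cube: "\<omega> \<in> space M \<Longrightarrow> X \<omega> \<in> cube d"
  using measurable_space[OF X_measurable] by simp

lemma integral_comp_X: "(\<integral>\<omega>. f (X \<omega>) \<partial>M) = (\<Sum>x\<in>cube d. f x * point_prob x)"
proof -
  let ?law = "distr M (count_space (cube d)) X"
  have "(\<integral>\<omega>. f (X \<omega>) \<partial>M) = (\<integral>x. f x * indicator (cube d) x \<partial>?law)"
    using X_measurable X_in_cube by (simp add: integral_distr cong: Bochner_Integration.integral_cong)
  also have "\<dots> = (\<Sum>x\<in>cube d. f x * measure ?law {x})"
    using finite_cube X_measurable
    by (intro integral_indicator_finite_real) (auto simp: emeasure_distr less_top[symmetric])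
  also have "\<dots> = (\<Sum>x\<in>cube d. f x * point_prob x)"
    using X_measurable by (intro sum.cong refl) (simp add: measure_distr point_prob_def vimage_def Int_def conj_commute)
  finally show ?thesis .
qed

lemma inner_rv_comp_X:
  "inner_rv M (\<lambda>\<omega>. f (X \<omega>)) (\<lambda>\<omega>. g (X \<omega>)) = weighted_inner (cube d) point_prob f g"
  using integral_comp_X[of "\<lambda>x. f x * g x"] by (simp add: inner_rv_def weighted_inner_def)

lemma Gamma_eq_weighted_inner:
  "Gamma M X A B = weighted_inner (cube d) point_prob (ebasis M X A) (ebasis M X B)"
  by (simp add: Gamma_def inner_rv_comp_X)

lemma point_prob_pos: "x \<in> cube d \<Longrightarrow> point_prob x > 0"
  using X_atoms_pos by (simp add: point_prob_def)

lemma margP_pos: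
  assumes "x \<in> cube d"
  shows "margP M X A x > 0"
proof -
  have "{\<omega> \<in> space M. \<forall>j\<in>A. X \<omega> j = x j} = X -` {z \<in> cube d. \<forall>j\<in>A. z j = x j} \<inter> space M"
    using X_in_cube by auto
  then have "{\<omega> \<in> space M. \<forall>j\<in>A. X \<omega> j = x j} \<in> events"
    using measurable_sets[OF X_measurable, of "{z \<in> cube d. \<forall>j\<in>A. z j = x j}"] by simp
  then have "point_prob x \<le> margP M X A x"
    unfolding point_prob_def margP_def by (intro finite_measure_mono) auto
  with point_prob_pos[OF assms] show ?thesis by simp
qed

lemma sum_walsh_ebasis_self_pos: "(\<Sum>x\<in>cube d. walsh A x * ebasis M X A x) > 0"
proof -
  have "walsh A x * ebasis M X A x = 1 / margP M X A x" for x
    by (simp add: ebasis_eq_walsh mult.assoc[symmetric] walsh_mult_self)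
  moreover have "(\<Sum>x\<in>cube d. 1 / margP M X A x) > 0"
    using finite_cube[of d] zero_in_cube[of d] margP_pos by (intro sum_pos) auto
  ultimately show ?thesis by simp
qed

lemma ebasis_independent:
  assumes zero: "\<And>x. x \<in> cube d \<Longrightarrow> (\<Sum>A\<in>Pow (Dset d). c A * ebasis M X A x) = 0"
  shows "\<forall>A\<in>Pow (Dset d). c A = 0"
proof (rule ccontr)
  define S where "S = {A \<in> Pow (Dset d). c A \<noteq> 0}"
  assume "\<not> (\<forall>A\<in>Pow (Dset d). c A = 0)"
  then have "S \<noteq> {}" and "finite S"
    using finite_Dset by (auto simp: S_def)
  then obtain A0 where A0: "A0 \<in> S" and maximal: "\<And>B. B \<in> S \<Longrightarrow> A0 \<subseteq> B \<Longrightarrow> A0 = B"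
    using finite_has_maximal[of S] by auto
  then have A0D: "A0 \<in> Pow (Dset d)"
    by (simp add: S_def)
  have others: "c B * (\<Sum>x\<in>cube d. walsh A0 x * ebasis M X B x) = 0"
    if "B \<in> Pow (Dset d) - {A0}" for B
  proof (cases "B \<in> S")
    case True
    moreover have "B \<noteq> A0"
      using that by simp
    ultimately have "\<not> A0 \<subseteq> B"
      using maximal by metis
    then obtain j where "j \<in> A0" "j \<notin> B"
      by blast
    then show ?thesis
      using sum_walsh_ebasis_eq_0[of j A0 B d M X] A0D by simp
  next
    case False
    then show ?thesis
      using that by (simp add: S_def)
  qed
  have "0 = (\<Sum>x\<in>cube d. walsh A0 x * (\<Sum>B\<in>Pow (Dset d). c B * ebasis M X B x))"
    by (simp add: zero)
  also have "\<dots> = (\<Sum>x\<in>cube d. \<Sum>B\<in>Pow (Dset d). c B * (walsh A0 x * ebasis M X B x))"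
    by (simp add: sum_distrib_left mult.left_commute)
  also have "\<dots> = (\<Sum>B\<in>Pow (Dset d). c B * (\<Sum>x\<in>cube d. walsh A0 x * ebasis M X B x))"
    by (subst sum.swap) (simp add: sum_distrib_left)
  also have "\<dots> = c A0 * (\<Sum>x\<in>cube d. walsh A0 x * ebasis M X A0 x)"
    using finite_Dset A0D others by (simp add: sum.remove[of _ A0] sum.neutral)
  finally show False
    using A0 sum_walsh_ebasis_self_pos[of A0] by (simp add: S_def)
qed

lemma Gamma_symmetric: "Gamma M X A B = Gamma M X B A"
  by (simp add: Gamma_eq_weighted_inner weighted_inner_commute)

lemma Gamma_inv_left_inverse:
  assumes "A \<subseteq> Dset d" "C \<subseteq> Dset d"
  shows "(\<Sum>B\<in>Pow (Dset d). Gamma_inv d M X A B * Gamma M X B C) = (if A = C then 1 else 0)"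
proof -
  let ?P = "Pow (Dset d)"
  have finite_P: "finite ?P"
    using finite_Dset by simp
  have injective: "\<forall>B\<in>?P. c B = 0"
    if "\<And>A. A \<in> ?P \<Longrightarrow> (\<Sum>B\<in>?P. c B * Gamma M X A B) = 0" for c
    using that
    by (intro gram_injective[where e = "ebasis M X", OF finite_cube point_prob_pos ebasis_independent])
      (simp_all add: Gamma_eq_weighted_inner)
  obtain N where
    left: "\<And>A C. A \<in> ?P \<Longrightarrow> C \<in> ?P \<Longrightarrow> (\<Sum>B\<in>?P. N A B * Gamma M X B C) = (if A = C then 1 else 0)"
    and right: "\<And>A C. A \<in> ?P \<Longrightarrow> C \<in> ?P \<Longrightarrow> (\<Sum>B\<in>?P. Gamma M X A B * N B C) = (if A = C then 1 else 0)"
    using symmetric_injective_matrix_invertible[where G = "Gamma M X", OF finite_P Gamma_symmetric injective]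
    by blast
  define N0 where "N0 A B = (if A \<subseteq> Dset d \<and> B \<subseteq> Dset d then N A B else 0)" for A B
  have "Gamma_inv d M X = N0"
    unfolding Gamma_inv_def
  proof (rule the_equality, goal_cases)
    case 1
    show ?case
      using left right by (simp add: N0_def)
  next
    case (2 N')
    show ?case
    proof (intro ext)
      fix A C
      show "N' A C = N0 A C"
        using left_inverse_eq_right_inverse[OF finite_P _ right, of N' A C] 2
        by (auto simp: N0_def)
    qed
  qed
  with left assms show ?thesis
    by (simp add: N0_def)
qed

definition dual_basis :: "nat set \<Rightarrow> (nat \<Rightarrow> nat) \<Rightarrow> real" where
  "dual_basis A y = (\<Sum>B\<in>Pow (Dset d). Gamma_inv d M X A B * ebasis M X B y)"

lemma edual_eq_dual_basis: "edual d M X A = (\<lambda>\<omega>. dual_basis A (X \<omega>))"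
  by (simp add: edual_def dual_basis_def fun_eq_iff)

lemma weighted_inner_ebasis_dual_basis:
  assumes "A \<subseteq> Dset d" "B \<subseteq> Dset d"
  shows "weighted_inner (cube d) point_prob (ebasis M X B) (dual_basis A) = (if A = B then 1 else 0)"
  unfolding dual_basis_def[abs_def]
  using Gamma_inv_left_inverse assms
  by (intro weighted_inner_gram_left_inverse) (simp_all add: Gamma_eq_weighted_inner)

lemma ebasis_expansion:
  assumes "x \<in> cube d"
  shows "f x = (\<Sum>A\<in>Pow (Dset d). weighted_inner (cube d) point_prob f (dual_basis A) * ebasis M X A x)"
proof -
  obtain c where c: "\<forall>x\<in>cube d. f x = (\<Sum>A\<in>Pow (Dset d). c A * ebasis M X A x)"
    using independent_functions_span[where v = "ebasis M X" and f = f,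
        OF finite_Pow_iff[THEN iffD2, OF finite_Dset] finite_cube card_cube_le ebasis_independent]
    by blast
  have "weighted_inner (cube d) point_prob f (dual_basis A) = c A" if "A \<in> Pow (Dset d)" for A
  proof (rule weighted_inner_dual_coefficient[where e = "ebasis M X" and I = "Pow (Dset d)"])
    show "finite (Pow (Dset d))"
      by (simp add: finite_Dset)
    show "weighted_inner (cube d) point_prob (ebasis M X C) (dual_basis B) = (if B = C then 1 else 0)"
      if "B \<in> Pow (Dset d)" "C \<in> Pow (Dset d)" for B C
      using that by (simp add: weighted_inner_ebasis_dual_basis)
  qed (use c that in simp_all)
  with c assms show ?thesis
    by simp
qed

end

theorem corollary3:
  fixes M :: "'a measure" and X :: "'a \<Rightarrow> nat \<Rightarrow> nat" and d :: nat
    and G :: "(nat \<Rightarrow> nat) \<Rightarrow> real"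
  assumes "prob_space M"
    and "X \<in> measurable M (count_space (cube d))"
    and "\<forall>x\<in>cube d. measure M {\<omega> \<in> space M. X \<omega> = x} > 0"
  shows "(\<forall>A\<subseteq>Dset d. \<forall>B\<subseteq>Dset d.
            inner_rv M (\<lambda>\<omega>. ebasis M X B (X \<omega>)) (edual d M X A) = (if A = B then 1 else 0))
       \<and> (AE \<omega> in M. G (X \<omega>) =
            (\<Sum>A\<in>Pow (Dset d). inner_rv M (\<lambda>\<omega>'. G (X \<omega>')) (edual d M X A) * ebasis M X A (X \<omega>)))"
proof -
  interpret binary_random_vector M X d
    using assms by (simp add: binary_random_vector_def binary_random_vector_axioms_def)
  have inner_edual: "inner_rv M (\<lambda>\<omega>. f (X \<omega>)) (edual d M X A) = weighted_inner (cube d) point_prob f (dual_basis A)"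
    for f A by (simp add: edual_eq_dual_basis inner_rv_comp_X)
  show ?thesis
  proof (intro conjI allI impI AE_I2)
    show "inner_rv M (\<lambda>\<omega>. ebasis M X B (X \<omega>)) (edual d M X A) = (if A = B then 1 else 0)"
      if "A \<subseteq> Dset d" "B \<subseteq> Dset d" for A B
      using that by (simp add: inner_edual weighted_inner_ebasis_dual_basis)
    show "G (X \<omega>) = (\<Sum>A\<in>Pow (Dset d). inner_rv M (\<lambda>\<omega>'. G (X \<omega>')) (edual d M X A) * ebasis M X A (X \<omega>))"
      if "\<omega> \<in> space M" for \<omega>
      using ebasis_expansion[OF X_in_cube[OF that]] by (simp add: inner_edual)
  qed
qed

end
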